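(* Let $\mathcal E=\widetilde{\Omega^1_D}(\mathcal A)$ be the bimodule of one-forms of a spectral triple $(\mathcal A,\mathcal H,D)$ and suppose Assumption III$'$ holds with data $\mathcal A'\subseteq\mathcal Z(\mathcal A)$, $\mathcal E'\subseteq\mathcal Z(\mathcal E)$. Then $\mathcal Z(\mathcal E)\cong\mathcal E'\otimes_{\mathcal A'}\mathcal Z(\mathcal A)$.
   Context: $\mathcal E$ is the span in $B(\mathcal H)$ of $a[D,b]$, $a,b\in\mathcal A$; $\mathcal Z(\mathcal E)=\{e:ea=ae\ \forall a\}$; $\mathcal Z(\mathcal A)$ the center. Assumption III$'$: there exist a unital $*$-subalgebra $\mathcal A'$ of $\mathcal Z(\mathcal A)$ and an $\mathcal A'$-submodule $\mathcal E'$ of $\mathcal Z(\mathcal E)$ such that $\mathcal E'$ is finitely generated projective over $\mathcal A'$ and the map $\mathcal E'\otimes_{\mathcal A'}\mathcal A\to\mathcal E$, $\sum_ie_i\otimes a_i\mapsto\sum_ie_ia_i$, is an isomorphism of vector spaces. *)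

theory Defs
  imports Complex_Main
begin

text \<open>Ambient algebra: a unital complex *-algebra (playing the role of B(H)),
  given by a ring type with a complex scalar multiplication and an involution.\<close>

definition complex_star_algebra ::
  "(complex \<Rightarrow> 'b::ring_1 \<Rightarrow> 'b) \<Rightarrow> ('b \<Rightarrow> 'b) \<Rightarrow> bool" where
  "complex_star_algebra sc st \<longleftrightarrow>
     (\<forall>c x y. sc c (x + y) = sc c x + sc c y) \<and>
     (\<forall>c d x. sc (c + d) x = sc c x + sc d x) \<and>
     (\<forall>c d x. sc c (sc d x) = sc (c * d) x) \<and>
     (\<forall>x. sc 1 x = x) \<and>
     (\<forall>c x y. sc c (x * y) = sc c x * y \<and> sc c (x * y) = x * sc c y) \<and>
     (\<forall>x y. st (x + y) = st x + st y) \<and>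
     (\<forall>c x. st (sc c x) = sc (cnj c) (st x)) \<and>
     (\<forall>x y. st (x * y) = st y * st x) \<and>
     (\<forall>x. st (st x) = x)"

definition unital_star_subalgebra ::
  "(complex \<Rightarrow> 'b::ring_1 \<Rightarrow> 'b) \<Rightarrow> ('b \<Rightarrow> 'b) \<Rightarrow> 'b set \<Rightarrow> bool" where
  "unital_star_subalgebra sc st S \<longleftrightarrow>
     1 \<in> S \<and> 0 \<in> S \<and>
     (\<forall>x\<in>S. \<forall>y\<in>S. x + y \<in> S \<and> x * y \<in> S) \<and>
     (\<forall>c. \<forall>x\<in>S. sc c x \<in> S) \<and>
     (\<forall>x\<in>S. st x \<in> S)"

definition cspan :: "(complex \<Rightarrow> 'b::ring_1 \<Rightarrow> 'b) \<Rightarrow> 'b set \<Rightarrow> 'b set" where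
  "cspan sc S = {x. \<exists>F c. finite F \<and> F \<subseteq> S \<and> x = (\<Sum>s\<in>F. sc (c s) s)}"

definition centre_in :: "'b::ring_1 set \<Rightarrow> 'b set \<Rightarrow> 'b set" where
  "centre_in A X = {x \<in> X. \<forall>a\<in>A. x * a = a * x}"

definition submodule_over :: "'b::ring_1 set \<Rightarrow> 'b set \<Rightarrow> bool" where
  "submodule_over R M \<longleftrightarrow>
     0 \<in> M \<and> (\<forall>x\<in>M. \<forall>y\<in>M. x + y \<in> M) \<and> (\<forall>x\<in>M. \<forall>r\<in>R. x * r \<in> M)"

text \<open>M is a finitely generated projective R-module (R commutative): M is a direct
  summand (retract, via R-linear maps) of the free module R^n for some n.\<close>
definition free_rank :: "'b::ring_1 set \<Rightarrow> nat \<Rightarrow> (nat \<Rightarrow> 'b) set" where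
  "free_rank R n = {v. (\<forall>k<n. v k \<in> R) \<and> (\<forall>k\<ge>n. v k = 0)}"

definition fg_projective :: "'b::ring_1 set \<Rightarrow> 'b set \<Rightarrow> bool" where
  "fg_projective R M \<longleftrightarrow>
     (\<exists>n i p.
        (\<forall>m\<in>M. i m \<in> free_rank R n) \<and>
        (\<forall>m\<in>M. \<forall>m'\<in>M. i (m + m') = (\<lambda>k. i m k + i m' k)) \<and>
        (\<forall>m\<in>M. \<forall>r\<in>R. i (m * r) = (\<lambda>k. i m k * r)) \<and>
        (\<forall>v\<in>free_rank R n. p v \<in> M) \<and>
        (\<forall>v\<in>free_rank R n. \<forall>w\<in>free_rank R n. p (\<lambda>k. v k + w k) = p v + p w) \<and>
        (\<forall>v\<in>free_rank R n. \<forall>r\<in>R. p (\<lambda>k. v k * r) = p v * r) \<and>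
        (\<forall>m\<in>M. p (i m) = m))"

text \<open>Tensor product M \<otimes>_R N, constructed as the free abelian group on M \<times> N
  modulo the R-balanced bilinearity relations.\<close>
definition free_ab :: "'b set \<Rightarrow> 'b set \<Rightarrow> ('b \<times> 'b \<Rightarrow> int) set" where
  "free_ab M N = {f. finite {x. f x \<noteq> 0} \<and> {x. f x \<noteq> 0} \<subseteq> M \<times> N}"

definition pt :: "'b \<times> 'b \<Rightarrow> 'b \<times> 'b \<Rightarrow> int" where
  "pt p = (\<lambda>x. if x = p then 1 else 0)"

inductive_set tensor_rel :: "'b::ring_1 set \<Rightarrow> 'b set \<Rightarrow> 'b set \<Rightarrow> ('b \<times> 'b \<Rightarrow> int) set"
  for M R N where
  zero: "(\<lambda>_. 0) \<in> tensor_rel M R N"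
| addl: "m \<in> M \<Longrightarrow> m' \<in> M \<Longrightarrow> n \<in> N \<Longrightarrow>
          (\<lambda>x. pt (m + m', n) x - pt (m, n) x - pt (m', n) x) \<in> tensor_rel M R N"
| addr: "m \<in> M \<Longrightarrow> n \<in> N \<Longrightarrow> n' \<in> N \<Longrightarrow>
          (\<lambda>x. pt (m, n + n') x - pt (m, n) x - pt (m, n') x) \<in> tensor_rel M R N"
| bal: "m \<in> M \<Longrightarrow> r \<in> R \<Longrightarrow> n \<in> N \<Longrightarrow>
          (\<lambda>x. pt (m * r, n) x - pt (m, r * n) x) \<in> tensor_rel M R N"
| add: "f \<in> tensor_rel M R N \<Longrightarrow> g \<in> tensor_rel M R N \<Longrightarrow>
          (\<lambda>x. f x + g x) \<in> tensor_rel M R N"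
| neg: "f \<in> tensor_rel M R N \<Longrightarrow> (\<lambda>x. - f x) \<in> tensor_rel M R N"

text \<open>Image of a formal sum  \<Sum> k_i (m_i \<otimes> n_i)  under  m \<otimes> n \<mapsto> m n.\<close>
definition tensor_eval :: "('b::ring_1 \<times> 'b \<Rightarrow> int) \<Rightarrow> 'b" where
  "tensor_eval f = (\<Sum>x\<in>{x. f x \<noteq> 0}. of_int (f x) * (fst x * snd x))"

text \<open>The multiplication map M \<otimes>_R N \<rightarrow> T, \<Sum> m_i \<otimes> n_i \<mapsto> \<Sum> m_i n_i, is well defined
  into T and is bijective (surjective, and its kernel is exactly the relations).\<close>
definition tensor_mult_iso :: "'b::ring_1 set \<Rightarrow> 'b set \<Rightarrow> 'b set \<Rightarrow> 'b set \<Rightarrow> bool" where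
  "tensor_mult_iso M R N T \<longleftrightarrow>
     (\<forall>f\<in>free_ab M N. tensor_eval f \<in> T) \<and>
     (\<forall>t\<in>T. \<exists>f\<in>free_ab M N. tensor_eval f = t) \<and>
     (\<forall>f\<in>free_ab M N. tensor_eval f = 0 \<longrightarrow> f \<in> tensor_rel M R N)"

end

theory Submission
  imports Defs
begin

text \<open>
  Let (P_k, i_k) be a dual basis of the projective A'-module E'. The coordinate maps
  e \<otimes> a \<mapsto> i_k(e) a are A'-balanced, hence well defined on E' \<otimes>_A' A, and
  \<Sum>_k P_k v_k recovers the image of a tensor with coordinates v_k.
  Since e and i_k(e) commute with A, the coordinates intertwine left and right
  multiplication by a \<in> A on the second factor; so if a tensor maps to a central
  element, its formal commutator with a is a relation and its coordinates are central.
  This gives surjectivity onto Z(E). For injectivity, a tensor over Z(A) with zero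
  image has zero coordinates, while the A'-relations already identify it with its
  expansion \<Sum>_k P_k \<otimes> v_k in E' \<otimes>_A' Z(A).
\<close>

section \<open>Formal sums and the maps they induce\<close>

definition tensor_lift :: "('b::ring_1 \<times> 'b \<Rightarrow> 'b) \<Rightarrow> ('b \<times> 'b \<Rightarrow> int) \<Rightarrow> 'b" where
  "tensor_lift \<phi> f = (\<Sum>x\<in>{x. f x \<noteq> 0}. of_int (f x) * \<phi> x)"

definition formal_sum :: "'i set \<Rightarrow> ('i \<Rightarrow> int) \<Rightarrow> ('i \<Rightarrow> 'b \<times> 'b) \<Rightarrow> 'b \<times> 'b \<Rightarrow> int" where
  "formal_sum I c g = (\<lambda>y. \<Sum>i\<in>I. c i * pt (g i) y)"

lemma tensor_eval_eq_tensor_lift: "tensor_eval f = tensor_lift (\<lambda>x. fst x * snd x) f"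
  by (simp add: tensor_eval_def tensor_lift_def)

lemma tensor_lift_superset:
  "finite T \<Longrightarrow> {x. f x \<noteq> 0} \<subseteq> T \<Longrightarrow> tensor_lift \<phi> f = (\<Sum>x\<in>T. of_int (f x) * \<phi> x)"
  unfolding tensor_lift_def by (rule sum.mono_neutral_left) auto

lemma tensor_lift_add:
  assumes "finite {x. f x \<noteq> 0}" "finite {x. g x \<noteq> 0}"
  shows "tensor_lift \<phi> (\<lambda>x. f x + g x) = tensor_lift \<phi> f + tensor_lift \<phi> g"
proof -
  let ?T = "{x. f x \<noteq> 0} \<union> {x. g x \<noteq> 0}"
  have "tensor_lift \<phi> (\<lambda>x. f x + g x) = (\<Sum>x\<in>?T. of_int (f x + g x) * \<phi> x)"
    by (rule tensor_lift_superset) (use assms in auto)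
  also have "\<dots> = (\<Sum>x\<in>?T. of_int (f x) * \<phi> x) + (\<Sum>x\<in>?T. of_int (g x) * \<phi> x)"
    by (simp add: distrib_right sum.distrib)
  also have "\<dots> = tensor_lift \<phi> f + tensor_lift \<phi> g"
    using assms by (simp add: tensor_lift_superset[of ?T f] tensor_lift_superset[of ?T g])
  finally show ?thesis .
qed

lemma tensor_lift_neg: "tensor_lift \<phi> (\<lambda>x. - f x) = - tensor_lift \<phi> f"
  unfolding tensor_lift_def by (simp add: sum_negf)

lemma tensor_lift_diff:
  assumes "finite {x. f x \<noteq> 0}" "finite {x. g x \<noteq> 0}"
  shows "tensor_lift \<phi> (\<lambda>x. f x - g x) = tensor_lift \<phi> f - tensor_lift \<phi> g"
  using tensor_lift_add[of f "\<lambda>x. - g x" \<phi>] assms by (simp add: tensor_lift_neg)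

lemma support_pt: "{x. pt p x \<noteq> 0} = {p}"
  by (auto simp: pt_def)

lemma tensor_lift_pt: "tensor_lift \<phi> (pt p) = \<phi> p"
  by (simp add: tensor_lift_def support_pt pt_def)

lemma support_formal_sum: "{y. formal_sum I c g y \<noteq> 0} \<subseteq> g ` I"
proof
  fix y assume "y \<in> {y. formal_sum I c g y \<noteq> 0}"
  then obtain i where "i \<in> I" "c i * pt (g i) y \<noteq> 0"
    unfolding formal_sum_def by (auto intro: sum.not_neutral_contains_not_neutral)
  then show "y \<in> g ` I" by (auto simp: pt_def split: if_splits)
qed

lemma finite_support_formal_sum: "finite I \<Longrightarrow> finite {y. formal_sum I c g y \<noteq> 0}"
  by (rule finite_subset[OF support_formal_sum]) simp

lemma formal_sum_in_free_ab:
  "finite I \<Longrightarrow> g ` I \<subseteq> M \<times> N \<Longrightarrow> formal_sum I c g \<in> free_ab M N"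
  unfolding free_ab_def using support_formal_sum[of I c g] finite_support_formal_sum[of I c g]
  by (simp add: subset_trans)

lemma formal_sum_support_self:
  assumes "finite {x. f x \<noteq> 0}"
  shows "formal_sum {x. f x \<noteq> 0} f id = f"
proof
  fix y
  have "formal_sum {x. f x \<noteq> 0} f id y = (\<Sum>x\<in>{x. f x \<noteq> 0}. if y = x then f x else 0)"
    unfolding formal_sum_def by (intro sum.cong) (auto simp: pt_def)
  also have "\<dots> = f y" using sum.delta'[OF assms, of y f] by simp
  finally show "formal_sum {x. f x \<noteq> 0} f id y = f y" .
qed

lemma tensor_lift_formal_sum:
  assumes "finite I"
  shows "tensor_lift \<phi> (formal_sum I c g) = (\<Sum>i\<in>I. of_int (c i) * \<phi> (g i))"
proof -
  have "tensor_lift \<phi> (formal_sum I c g) = (\<Sum>y\<in>g ` I. of_int (formal_sum I c g y) * \<phi> y)"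
    using assms support_formal_sum[of I c g] by (intro tensor_lift_superset) auto
  also have "\<dots> = (\<Sum>y\<in>g ` I. of_int (\<Sum>i\<in>I. c i * pt (g i) y) * \<phi> y)"
    by (simp add: formal_sum_def)
  also have "\<dots> = (\<Sum>i\<in>I. of_int (c i) * (\<Sum>y\<in>g ` I. of_int (pt (g i) y) * \<phi> y))"
    by (simp add: of_int_sum sum_distrib_right sum_distrib_left mult.assoc sum.swap[of _ "g ` I"])
  also have "\<dots> = (\<Sum>i\<in>I. of_int (c i) * tensor_lift \<phi> (pt (g i)))"
    using assms by (intro sum.cong refl) (simp add: tensor_lift_superset[symmetric] support_pt)
  also have "\<dots> = (\<Sum>i\<in>I. of_int (c i) * \<phi> (g i))"
    by (simp add: tensor_lift_pt)
  finally show ?thesis .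
qed

section \<open>Tensor relations\<close>

definition balanced_biadditive ::
  "'b::ring_1 set \<Rightarrow> 'b set \<Rightarrow> 'b set \<Rightarrow> ('b \<times> 'b \<Rightarrow> 'b) \<Rightarrow> bool" where
  "balanced_biadditive M R N \<phi> \<longleftrightarrow>
     (\<forall>m\<in>M. \<forall>m'\<in>M. \<forall>n\<in>N. \<phi> (m + m', n) = \<phi> (m, n) + \<phi> (m', n)) \<and>
     (\<forall>m\<in>M. \<forall>n\<in>N. \<forall>n'\<in>N. \<phi> (m, n + n') = \<phi> (m, n) + \<phi> (m, n')) \<and>
     (\<forall>m\<in>M. \<forall>r\<in>R. \<forall>n\<in>N. \<phi> (m * r, n) = \<phi> (m, r * n))"

lemma finite_support_pt_diff: "finite {x. pt p x - pt q x \<noteq> 0}"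
  by (rule finite_subset[of _ "{p, q}"]) (auto simp: pt_def)

lemma finite_support_pt_diff3: "finite {x. pt p x - pt q x - pt r x \<noteq> 0}"
  by (rule finite_subset[of _ "{p, q, r}"]) (auto simp: pt_def)

lemma tensor_lift_pt_diff: "tensor_lift \<phi> (\<lambda>x. pt p x - pt q x) = \<phi> p - \<phi> q"
  by (simp add: tensor_lift_diff tensor_lift_pt support_pt)

lemma tensor_lift_pt_diff3:
  "tensor_lift \<phi> (\<lambda>x. pt p x - pt q x - pt r x) = \<phi> p - \<phi> q - \<phi> r"
  using tensor_lift_diff[OF finite_support_pt_diff[of p q], of "pt r" \<phi>]
  by (simp add: tensor_lift_pt_diff tensor_lift_pt support_pt)

lemma finite_support_tensor_rel: "f \<in> tensor_rel M R N \<Longrightarrow> finite {x. f x \<noteq> 0}"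
proof (induction rule: tensor_rel.induct)
  case zero
  show ?case by simp
next
  case (addl m m' n)
  show ?case by (rule finite_support_pt_diff3)
next
  case (addr m n n')
  show ?case by (rule finite_support_pt_diff3)
next
  case (bal m r n)
  show ?case by (rule finite_support_pt_diff)
next
  case (add f g)
  have "{x. f x + g x \<noteq> 0} \<subseteq> {x. f x \<noteq> 0} \<union> {x. g x \<noteq> 0}" by auto
  then show ?case using add.IH by (meson finite_Un finite_subset)
next
  case (neg f)
  then show ?case by simp
qed

lemma tensor_lift_tensor_rel:
  assumes "f \<in> tensor_rel M R N" and \<phi>: "balanced_biadditive M R N \<phi>"
  shows "tensor_lift \<phi> f = 0"
  using assms(1)
proof induction
  case zero
  then show ?case by (simp add: tensor_lift_def)
next
  case (addl m m' n)
  then show ?case using \<phi>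
    by (simp add: tensor_lift_pt_diff3 balanced_biadditive_def)
next
  case (addr m n n')
  then show ?case using \<phi>
    by (simp add: tensor_lift_pt_diff3 balanced_biadditive_def)
next
  case (bal m r n)
  then show ?case using \<phi>
    by (simp add: tensor_lift_pt_diff balanced_biadditive_def)
next
  case (add f g)
  then show ?case by (simp add: tensor_lift_add finite_support_tensor_rel)
next
  case (neg f)
  then show ?case by (simp add: tensor_lift_neg)
qed

definition tensor_equiv ::
  "'b::ring_1 set \<Rightarrow> 'b set \<Rightarrow> 'b set \<Rightarrow> ('b \<times> 'b \<Rightarrow> int) \<Rightarrow> ('b \<times> 'b \<Rightarrow> int) \<Rightarrow> bool" where
  "tensor_equiv M R N f g \<longleftrightarrow> (\<lambda>x. f x - g x) \<in> tensor_rel M R N"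

lemma tensor_equiv_refl: "tensor_equiv M R N f f"
  unfolding tensor_equiv_def using tensor_rel.zero by simp

lemma tensor_equiv_sym: "tensor_equiv M R N f g \<Longrightarrow> tensor_equiv M R N g f"
  unfolding tensor_equiv_def by (drule tensor_rel.neg) simp

lemma tensor_equiv_trans [trans]:
  "tensor_equiv M R N f g \<Longrightarrow> tensor_equiv M R N g h \<Longrightarrow> tensor_equiv M R N f h"
  unfolding tensor_equiv_def by (drule (1) tensor_rel.add) simp

lemma tensor_equiv_add:
  "tensor_equiv M R N f f' \<Longrightarrow> tensor_equiv M R N g g' \<Longrightarrow>
    tensor_equiv M R N (\<lambda>x. f x + g x) (\<lambda>x. f' x + g' x)"
  unfolding tensor_equiv_def by (drule (1) tensor_rel.add) (simp add: algebra_simps)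

lemma tensor_equiv_0_iff: "tensor_equiv M R N f (\<lambda>_. 0) \<longleftrightarrow> f \<in> tensor_rel M R N"
  unfolding tensor_equiv_def by simp

lemma tensor_rel_scale: "h \<in> tensor_rel M R N \<Longrightarrow> (\<lambda>x. c * h x) \<in> tensor_rel M R N"
proof -
  assume h: "h \<in> tensor_rel M R N"
  have nat: "(\<lambda>x. int k * h x) \<in> tensor_rel M R N" for k
  proof (induction k)
    case 0
    then show ?case using tensor_rel.zero by simp
  next
    case (Suc k)
    from tensor_rel.add[OF Suc h] show ?case by (simp add: algebra_simps)
  qed
  show ?thesis
  proof (cases c rule: int_cases2)
    case (nonneg k)
    then show ?thesis using nat by blast
  next
    case (nonpos k)
    then show ?thesis using tensor_rel.neg[OF nat[of k]] by simp
  qed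
qed

lemma tensor_equiv_scale:
  "tensor_equiv M R N f g \<Longrightarrow> tensor_equiv M R N (\<lambda>x. c * f x) (\<lambda>x. c * g x)"
  unfolding tensor_equiv_def by (drule tensor_rel_scale[where c=c]) (simp add: algebra_simps)

lemma tensor_equiv_sum:
  "finite I \<Longrightarrow> (\<And>i. i \<in> I \<Longrightarrow> tensor_equiv M R N (f i) (g i)) \<Longrightarrow>
   tensor_equiv M R N (\<lambda>x. \<Sum>i\<in>I. f i x) (\<lambda>x. \<Sum>i\<in>I. g i x)"
proof (induction I rule: finite_induct)
  case empty
  then show ?case by (simp add: tensor_equiv_refl)
next
  case (insert i I)
  then show ?case using tensor_equiv_add[of M R N "f i" "g i"] by simp
qed

definition add_subgroup :: "'b::ring_1 set \<Rightarrow> bool" where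
  "add_subgroup X \<longleftrightarrow> 0 \<in> X \<and> (\<forall>x\<in>X. \<forall>y\<in>X. x + y \<in> X) \<and> (\<forall>x\<in>X. - x \<in> X)"

lemma sum_closed:
  "0 \<in> X \<Longrightarrow> \<forall>x\<in>X. \<forall>y\<in>X. x + y \<in> X \<Longrightarrow> (\<And>i. i \<in> I \<Longrightarrow> g i \<in> X) \<Longrightarrow> sum g I \<in> X"
  by (induction I rule: infinite_finite_induct) auto

lemma add_subgroup_of_int_mult:
  assumes X: "add_subgroup X" and a: "a \<in> X"
  shows "of_int c * a \<in> X"
proof -
  have nat: "of_nat k * a \<in> X" for k
    by (induction k) (use X a in \<open>auto simp: add_subgroup_def algebra_simps\<close>)
  show ?thesis
  proof (cases c rule: int_cases2)
    case (nonneg k)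
    then show ?thesis using nat[of k] by simp
  next
    case (nonpos k)
    then show ?thesis using nat[of k] X by (simp add: add_subgroup_def)
  qed
qed

lemma pt_zero_right_in_tensor_rel: "m \<in> M \<Longrightarrow> 0 \<in> N \<Longrightarrow> pt (m, 0) \<in> tensor_rel M R N"
  using tensor_rel.neg[OF tensor_rel.addr[of m M 0 N 0 R]] by simp

lemma tensor_equiv_pt_add_right:
  "m \<in> M \<Longrightarrow> a \<in> N \<Longrightarrow> b \<in> N \<Longrightarrow>
   tensor_equiv M R N (pt (m, a + b)) (\<lambda>x. pt (m, a) x + pt (m, b) x)"
  unfolding tensor_equiv_def using tensor_rel.addr[of m M a N b R] by (simp add: algebra_simps)

lemma tensor_equiv_pt_sum_right:
  assumes "m \<in> M" "add_subgroup N" "finite I" "\<And>i. i \<in> I \<Longrightarrow> g i \<in> N"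
  shows "tensor_equiv M R N (pt (m, \<Sum>i\<in>I. g i)) (\<lambda>x. \<Sum>i\<in>I. pt (m, g i) x)"
  using assms(3,4)
proof (induction I rule: finite_induct)
  case empty
  then show ?case
    using pt_zero_right_in_tensor_rel[of m M N R] assms by (simp add: tensor_equiv_def add_subgroup_def)
next
  case (insert i I)
  have "sum g I \<in> N" using insert assms(2) sum_closed[of N I g] by (auto simp: add_subgroup_def)
  then have "tensor_equiv M R N (pt (m, g i + sum g I)) (\<lambda>x. pt (m, g i) x + pt (m, sum g I) x)"
    using tensor_equiv_pt_add_right[of m M "g i" N "sum g I" R] insert assms(1) by auto
  moreover have "tensor_equiv M R N (\<lambda>x. pt (m, g i) x + pt (m, sum g I) x)
     (\<lambda>x. pt (m, g i) x + (\<lambda>x. \<Sum>i\<in>I. pt (m, g i) x) x)"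
    by (rule tensor_equiv_add) (use insert tensor_equiv_refl in auto)
  ultimately show ?case using insert by (simp add: tensor_equiv_trans)
qed

lemma tensor_equiv_pt_neg_right:
  assumes m: "m \<in> M" and N: "add_subgroup N" and a: "a \<in> N"
  shows "tensor_equiv M R N (pt (m, - a)) (\<lambda>x. - pt (m, a) x)"
proof -
  have "- a \<in> N" "0 \<in> N" using N a by (auto simp: add_subgroup_def)
  with tensor_rel.add[OF pt_zero_right_in_tensor_rel[OF m] tensor_rel.neg[OF tensor_rel.addr[OF m a]]]
  have "(\<lambda>x. pt (m, 0) x + - (pt (m, a + - a) x - pt (m, a) x - pt (m, - a) x)) \<in> tensor_rel M R N"
    by blast
  then show ?thesis unfolding tensor_equiv_def by (simp add: algebra_simps)
qed

lemma tensor_equiv_pt_of_int_right: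
  assumes m: "m \<in> M" and N: "add_subgroup N" and a: "a \<in> N"
  shows "tensor_equiv M R N (pt (m, of_int c * a)) (\<lambda>x. c * pt (m, a) x)"
proof -
  have nat: "tensor_equiv M R N (pt (m, of_nat k * a)) (\<lambda>x. int k * pt (m, a) x)" for k
  proof (induction k)
    case 0
    then show ?case
      using pt_zero_right_in_tensor_rel[OF m, of N R] N by (simp add: tensor_equiv_def add_subgroup_def)
  next
    case (Suc k)
    have "of_nat k * a \<in> N" using add_subgroup_of_int_mult[OF N a, of "int k"] by simp
    then have "tensor_equiv M R N (pt (m, of_nat k * a + a)) (\<lambda>x. pt (m, of_nat k * a) x + pt (m, a) x)"
      using tensor_equiv_pt_add_right[OF m _ a] by blast
    moreover have "tensor_equiv M R N (\<lambda>x. pt (m, of_nat k * a) x + pt (m, a) x)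
        (\<lambda>x. (\<lambda>x. int k * pt (m, a) x) x + pt (m, a) x)"
      by (rule tensor_equiv_add) (use Suc tensor_equiv_refl in auto)
    ultimately show ?case by (auto simp: algebra_simps dest: tensor_equiv_trans)
  qed
  show ?thesis
  proof (cases c rule: int_cases2)
    case (nonneg k)
    then show ?thesis using nat[of k] by simp
  next
    case (nonpos k)
    have "of_nat k * a \<in> N" using add_subgroup_of_int_mult[OF N a, of "int k"] by simp
    then have "tensor_equiv M R N (pt (m, - (of_nat k * a))) (\<lambda>x. - pt (m, of_nat k * a) x)"
      using tensor_equiv_pt_neg_right[OF m N] by blast
    moreover have "tensor_equiv M R N (\<lambda>x. - pt (m, of_nat k * a) x) (\<lambda>x. - (int k * pt (m, a) x))"
      using tensor_equiv_scale[OF nat[of k], of "-1"] by simp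
    ultimately show ?thesis using nonpos by (auto dest: tensor_equiv_trans)
  qed
qed

lemma tensor_equiv_pt_lincomb_right:
  assumes m: "m \<in> M" and N: "add_subgroup N" and I: "finite I" and g: "\<And>i. i \<in> I \<Longrightarrow> g i \<in> N"
  shows "tensor_equiv M R N (pt (m, \<Sum>i\<in>I. of_int (c i) * g i)) (\<lambda>x. \<Sum>i\<in>I. c i * pt (m, g i) x)"
proof -
  have "tensor_equiv M R N (pt (m, \<Sum>i\<in>I. of_int (c i) * g i)) (\<lambda>x. \<Sum>i\<in>I. pt (m, of_int (c i) * g i) x)"
    by (rule tensor_equiv_pt_sum_right[OF m N I]) (use add_subgroup_of_int_mult[OF N] g in auto)
  moreover have "tensor_equiv M R N (\<lambda>x. \<Sum>i\<in>I. pt (m, of_int (c i) * g i) x) (\<lambda>x. \<Sum>i\<in>I. c i * pt (m, g i) x)"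
    by (rule tensor_equiv_sum[OF I]) (use tensor_equiv_pt_of_int_right[OF m N] g in auto)
  ultimately show ?thesis by (rule tensor_equiv_trans)
qed

lemma tensor_equiv_pt_sum_left:
  assumes "n \<in> N" "0 \<in> M" "\<forall>x\<in>M. \<forall>y\<in>M. x + y \<in> M" "finite I" "\<And>i. i \<in> I \<Longrightarrow> g i \<in> M"
  shows "tensor_equiv M R N (pt (\<Sum>i\<in>I. g i, n)) (\<lambda>x. \<Sum>i\<in>I. pt (g i, n) x)"
  using assms(4,5)
proof (induction I rule: finite_induct)
  case empty
  from tensor_rel.neg[OF tensor_rel.addl[OF assms(2) assms(2) assms(1)]]
  show ?case by (simp add: tensor_equiv_def)
next
  case (insert i I)
  have "sum g I \<in> M" using insert.prems assms(2,3) sum_closed[of M I g] by blast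
  moreover have "g i \<in> M" using insert.prems by simp
  ultimately have "tensor_equiv M R N (pt (g i + sum g I, n)) (\<lambda>x. pt (g i, n) x + pt (sum g I, n) x)"
    using tensor_rel.addl[of "g i" M "sum g I" n N R] assms(1)
    by (simp add: tensor_equiv_def algebra_simps)
  moreover have "tensor_equiv M R N (\<lambda>x. pt (g i, n) x + pt (sum g I, n) x)
     (\<lambda>x. pt (g i, n) x + (\<lambda>x. \<Sum>i\<in>I. pt (g i, n) x) x)"
    by (rule tensor_equiv_add) (use insert tensor_equiv_refl in auto)
  ultimately show ?case using insert.hyps by (simp add: tensor_equiv_trans)
qed

lemma tensor_equiv_pt_balance:
  "m \<in> M \<Longrightarrow> r \<in> R \<Longrightarrow> n \<in> N \<Longrightarrow> tensor_equiv M R N (pt (m * r, n)) (pt (m, r * n))"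
  unfolding tensor_equiv_def by (rule tensor_rel.bal)

section \<open>Dual bases\<close>

definition dual_basis :: "'b::ring_1 set \<Rightarrow> 'b set \<Rightarrow> nat \<Rightarrow> (nat \<Rightarrow> 'b) \<Rightarrow> ('b \<Rightarrow> nat \<Rightarrow> 'b) \<Rightarrow> bool" where
  "dual_basis R M n P i \<longleftrightarrow>
     (\<forall>k<n. P k \<in> M) \<and> (\<forall>m\<in>M. \<forall>k. i m k \<in> R) \<and>
     (\<forall>m\<in>M. \<forall>m'\<in>M. i (m + m') = (\<lambda>k. i m k + i m' k)) \<and>
     (\<forall>m\<in>M. \<forall>r\<in>R. i (m * r) = (\<lambda>k. i m k * r)) \<and>
     (\<forall>m\<in>M. (\<Sum>k<n. P k * i m k) = m)"

lemma free_rank_sum: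
  fixes p :: "(nat \<Rightarrow> 'b::ring_1) \<Rightarrow> 'c::ab_group_add"
  assumes R: "0 \<in> R" "\<forall>x\<in>R. \<forall>y\<in>R. x + y \<in> R"
    and p_add: "\<forall>v\<in>free_rank R n. \<forall>w\<in>free_rank R n. p (\<lambda>k. v k + w k) = p v + p w"
    and K: "finite K" "\<forall>k\<in>K. w k \<in> free_rank R n"
  shows "(\<lambda>j. \<Sum>k\<in>K. w k j) \<in> free_rank R n \<and> p (\<lambda>j. \<Sum>k\<in>K. w k j) = (\<Sum>k\<in>K. p (w k))"
  using K
proof (induction K rule: finite_induct)
  case empty
  have zero: "(\<lambda>j. 0) \<in> free_rank R n" using R(1) by (simp add: free_rank_def)
  have "p (\<lambda>j. 0) = p (\<lambda>j. 0) + p (\<lambda>j. 0)"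
    using p_add[rule_format, OF zero zero] by simp
  then show ?case using zero by simp
next
  case (insert k K)
  then have "w k \<in> free_rank R n" "(\<lambda>j. \<Sum>k\<in>K. w k j) \<in> free_rank R n" by auto
  then show ?case
    using insert p_add R(2) by (simp add: free_rank_def)
qed

lemma free_rank_unit_expansion:
  assumes "v \<in> free_rank R n"
  shows "(\<lambda>j. \<Sum>k<n. (if j = k then 1 else 0) * v k) = v"
proof
  fix j
  have "(\<Sum>k<n. (if j = k then 1 else 0) * v k) = (\<Sum>k\<in>{..<n}. if k = j then v k else 0)"
    by (intro sum.cong) auto
  also have "\<dots> = v j"
    using assms by (cases "j < n") (auto simp: free_rank_def)
  finally show "(\<Sum>k<n. (if j = k then 1 else 0) * v k) = v j" .
qed

lemma fg_projective_imp_dual_basis: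
  fixes R M :: "'b::ring_1 set"
  assumes proj: "fg_projective R M"
    and R: "0 \<in> R" "1 \<in> R" "\<forall>x\<in>R. \<forall>y\<in>R. x + y \<in> R"
  shows "\<exists>n P i. dual_basis R M n P i"
proof -
  obtain n i p where
    i_free: "\<forall>m\<in>M. i m \<in> free_rank R n" and
    i_add: "\<forall>m\<in>M. \<forall>m'\<in>M. i (m + m') = (\<lambda>k. i m k + i m' k)" and
    i_mult: "\<forall>m\<in>M. \<forall>r\<in>R. i (m * r) = (\<lambda>k. i m k * r)" and
    p_in: "\<forall>v\<in>free_rank R n. p v \<in> M" and
    p_add: "\<forall>v\<in>free_rank R n. \<forall>w\<in>free_rank R n. p (\<lambda>k. v k + w k) = p v + p w" and
    p_mult: "\<forall>v\<in>free_rank R n. \<forall>r\<in>R. p (\<lambda>k. v k * r) = p v * r" and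
    p_i: "\<forall>m\<in>M. p (i m) = m"
    using proj unfolding fg_projective_def by blast
  define \<delta> where "\<delta> k = (\<lambda>j::nat. if j = k then (1::'b) else 0)" for k
  define P where "P k = p (\<delta> k)" for k
  have i_in: "i m k \<in> R" if "m \<in> M" for m k
    using i_free that R(1) by (cases "k < n") (auto simp: free_rank_def)
  have \<delta>_free: "(\<lambda>j. \<delta> k j * r) \<in> free_rank R n" if "k < n" "r \<in> R" for k r
    using that R(1) by (auto simp: free_rank_def \<delta>_def)
  have "(\<Sum>k<n. P k * i m k) = m" if m: "m \<in> M" for m
  proof -
    have "(\<Sum>k<n. P k * i m k) = (\<Sum>k<n. p (\<lambda>j. \<delta> k j * i m k))"
      using p_mult \<delta>_free[of _ 1] R(2) i_in[OF m] by (simp add: P_def)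
    also have "\<dots> = p (\<lambda>j. \<Sum>k<n. \<delta> k j * i m k)"
      using free_rank_sum[OF R(1,3) p_add, of "{..<n}" "\<lambda>k j. \<delta> k j * i m k"] \<delta>_free i_in[OF m]
      by simp
    also have "(\<lambda>j. \<Sum>k<n. \<delta> k j * i m k) = i m"
      using free_rank_unit_expansion[OF i_free[rule_format, OF m]] by (simp add: \<delta>_def)
    finally show ?thesis using p_i m by simp
  qed
  moreover have "P k \<in> M" if "k < n" for k
    using p_in \<delta>_free[OF that R(2)] by (simp add: P_def)
  ultimately have "dual_basis R M n P i"
    using i_in i_add i_mult by (simp add: dual_basis_def)
  then show ?thesis by blast
qed

definition dual_coordinate :: "('b::ring_1 \<Rightarrow> nat \<Rightarrow> 'b) \<Rightarrow> nat \<Rightarrow> 'b \<times> 'b \<Rightarrow> 'b" where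
  "dual_coordinate i k x = i (fst x) k * snd x"

lemma balanced_dual_coordinate:
  "dual_basis R M n P i \<Longrightarrow> balanced_biadditive M R N (dual_coordinate i k)"
  by (simp add: dual_basis_def balanced_biadditive_def dual_coordinate_def
      distrib_left distrib_right mult.assoc)

lemma of_int_mult_left_commute: "of_int c * (a * y) = a * (of_int c * (y::'b::ring_1))"
  by (metis mult.assoc mult_of_int_commute)

lemma tensor_eval_dual_basis_expansion:
  assumes basis: "dual_basis R M n P i" and f: "f \<in> free_ab M N"
  shows "(\<Sum>k<n. P k * tensor_lift (dual_coordinate i k) f) = tensor_eval f"
proof -
  let ?S = "{x. f x \<noteq> 0}"
  have "(\<Sum>k<n. P k * tensor_lift (dual_coordinate i k) f)
      = (\<Sum>k<n. \<Sum>x\<in>?S. of_int (f x) * (P k * i (fst x) k * snd x))"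
    unfolding tensor_lift_def dual_coordinate_def sum_distrib_left
    by (intro sum.cong refl) (simp add: of_int_mult_left_commute mult.assoc)
  also have "\<dots> = (\<Sum>x\<in>?S. of_int (f x) * ((\<Sum>k<n. P k * i (fst x) k) * snd x))"
    by (subst sum.swap) (simp add: sum_distrib_left sum_distrib_right)
  also have "\<dots> = (\<Sum>x\<in>?S. of_int (f x) * (fst x * snd x))"
    using f basis by (intro sum.cong refl) (auto simp: free_ab_def dual_basis_def)
  finally show ?thesis by (simp add: tensor_eval_def)
qed

lemma tensor_equiv_dual_basis_expansion:
  assumes basis: "dual_basis R M n P i" and M: "submodule_over R M"
    and N: "add_subgroup N" and RN: "\<forall>r\<in>R. \<forall>z\<in>N. r * z \<in> N"
    and f: "f \<in> free_ab M N"
  shows "tensor_equiv M R N f (\<lambda>y. \<Sum>k<n. pt (P k, tensor_lift (dual_coordinate i k) f) y)"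
proof -
  let ?S = "{x. f x \<noteq> 0}"
  define r where "r x k = i (fst x) k * snd x" for x k
  have S: "?S \<subseteq> M \<times> N" "finite ?S" using f by (auto simp: free_ab_def)
  have P: "P k \<in> M" if "k < n" for k using basis that by (simp add: dual_basis_def)
  have iR: "i m k \<in> R" if "m \<in> M" for m k using basis that by (simp add: dual_basis_def)
  have r: "r x k \<in> N" if "x \<in> ?S" for x k using S that iR RN by (auto simp: r_def)
  have expand_pt: "tensor_equiv M R N (pt x) (\<lambda>y. \<Sum>k<n. pt (P k, r x k) y)" if x: "x \<in> ?S" for x
  proof -
    have e: "fst x \<in> M" and z: "snd x \<in> N" using S x by auto
    have "pt x = pt (\<Sum>k<n. P k * i (fst x) k, snd x)"
      using basis e by (simp add: dual_basis_def)
    moreover have "tensor_equiv M R N (pt (\<Sum>k<n. P k * i (fst x) k, snd x))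
        (\<lambda>y. \<Sum>k<n. pt (P k * i (fst x) k, snd x) y)"
      using M P iR[OF e] z by (intro tensor_equiv_pt_sum_left) (auto simp: submodule_over_def)
    moreover have "tensor_equiv M R N (\<lambda>y. \<Sum>k<n. pt (P k * i (fst x) k, snd x) y)
        (\<lambda>y. \<Sum>k<n. pt (P k, r x k) y)"
      unfolding r_def using P iR[OF e] z by (intro tensor_equiv_sum tensor_equiv_pt_balance) auto
    ultimately show ?thesis by (auto dest: tensor_equiv_trans)
  qed
  have "tensor_equiv M R N (formal_sum ?S f id) (\<lambda>y. \<Sum>x\<in>?S. f x * (\<Sum>k<n. pt (P k, r x k) y))"
    unfolding formal_sum_def id_apply using S(2) expand_pt
    by (intro tensor_equiv_sum tensor_equiv_scale) auto
  then have "tensor_equiv M R N f (\<lambda>y. \<Sum>x\<in>?S. f x * (\<Sum>k<n. pt (P k, r x k) y))"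
    by (simp only: formal_sum_support_self[OF S(2)])
  also have "(\<lambda>y. \<Sum>x\<in>?S. f x * (\<Sum>k<n. pt (P k, r x k) y))
      = (\<lambda>y. \<Sum>k<n. \<Sum>x\<in>?S. f x * pt (P k, r x k) y)"
    by (subst sum.swap) (simp add: sum_distrib_left)
  also have "tensor_equiv M R N \<dots> (\<lambda>y. \<Sum>k<n. pt (P k, \<Sum>x\<in>?S. of_int (f x) * r x k) y)"
    using P r S(2) N
    by (intro tensor_equiv_sum tensor_equiv_sym[OF tensor_equiv_pt_lincomb_right]) auto
  finally show ?thesis
    by (simp add: tensor_lift_def dual_coordinate_def r_def)
qed

section \<open>Tensors with central values\<close>

lemma free_ab_mono: "N \<subseteq> N' \<Longrightarrow> free_ab M N \<subseteq> free_ab M N'"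
  by (auto simp: free_ab_def)

lemma free_ab_support: "f \<in> free_ab M N \<Longrightarrow> f x \<noteq> 0 \<Longrightarrow> fst x \<in> M \<and> snd x \<in> N"
  by (auto simp: free_ab_def)

lemma free_ab_diff:
  assumes "f \<in> free_ab M N" "g \<in> free_ab M N"
  shows "(\<lambda>x. f x - g x) \<in> free_ab M N"
proof -
  have sub: "{x. f x - g x \<noteq> 0} \<subseteq> {x. f x \<noteq> 0} \<union> {x. g x \<noteq> 0}" by auto
  have "finite {x. f x - g x \<noteq> 0}"
    using assms by (intro finite_subset[OF sub]) (simp add: free_ab_def)
  moreover have "{x. f x - g x \<noteq> 0} \<subseteq> M \<times> N"
    using assms sub by (auto simp: free_ab_def)
  ultimately show ?thesis by (simp add: free_ab_def)
qed

text \<open>Represents a t - t a when every first factor of t commutes with a.\<close>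

definition formal_commutator :: "'b::ring_1 \<Rightarrow> ('b \<times> 'b \<Rightarrow> int) \<Rightarrow> 'b \<times> 'b \<Rightarrow> int" where
  "formal_commutator a f =
     (\<lambda>y. formal_sum {x. f x \<noteq> 0} f (\<lambda>x. (fst x, a * snd x)) y
          - formal_sum {x. f x \<noteq> 0} f (\<lambda>x. (fst x, snd x * a)) y)"

lemma formal_commutator_in_free_ab:
  assumes f: "f \<in> free_ab M N" and N: "\<And>z. z \<in> N \<Longrightarrow> a * z \<in> N \<and> z * a \<in> N"
  shows "formal_commutator a f \<in> free_ab M N"
proof -
  have S: "finite {x. f x \<noteq> 0}" "{x. f x \<noteq> 0} \<subseteq> M \<times> N" using f by (auto simp: free_ab_def)
  then show ?thesis
    unfolding formal_commutator_def using N
    by (intro free_ab_diff formal_sum_in_free_ab) auto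
qed

lemma tensor_lift_formal_commutator:
  assumes S: "finite {x. f x \<noteq> 0}"
    and \<phi>: "\<And>x. f x \<noteq> 0 \<Longrightarrow> \<phi> (fst x, a * snd x) = a * \<phi> x \<and> \<phi> (fst x, snd x * a) = \<phi> x * a"
  shows "tensor_lift \<phi> (formal_commutator a f) = a * tensor_lift \<phi> f - tensor_lift \<phi> f * a"
proof -
  let ?S = "{x. f x \<noteq> 0}"
  have "tensor_lift \<phi> (formal_commutator a f)
      = (\<Sum>x\<in>?S. of_int (f x) * \<phi> (fst x, a * snd x)) - (\<Sum>x\<in>?S. of_int (f x) * \<phi> (fst x, snd x * a))"
    unfolding formal_commutator_def
    by (simp add: tensor_lift_diff finite_support_formal_sum S tensor_lift_formal_sum)
  also have "\<dots> = (\<Sum>x\<in>?S. a * (of_int (f x) * \<phi> x)) - (\<Sum>x\<in>?S. of_int (f x) * \<phi> x * a)"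
    using \<phi> by (simp add: of_int_mult_left_commute mult.assoc)
  also have "\<dots> = a * tensor_lift \<phi> f - tensor_lift \<phi> f * a"
    by (simp add: tensor_lift_def sum_distrib_left sum_distrib_right)
  finally show ?thesis .
qed

lemma centre_in_subset: "centre_in A X \<subseteq> X"
  by (auto simp: centre_in_def)

lemma centre_in_left_commute: "z \<in> centre_in A X \<Longrightarrow> a \<in> A \<Longrightarrow> z * (a * b) = a * (z * b)"
  by (auto simp: centre_in_def simp flip: mult.assoc)

lemma add_subgroup_centre_in: "add_subgroup X \<Longrightarrow> add_subgroup (centre_in A X)"
  by (auto simp: add_subgroup_def centre_in_def algebra_simps)

lemma centre_in_mult_closed:
  assumes "\<forall>x\<in>X. \<forall>y\<in>X. x * y \<in> X" "x \<in> centre_in A X" "y \<in> centre_in A X"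
  shows "x * y \<in> centre_in A X"
proof -
  have "x * y * a = a * (x * y)" if "a \<in> A" for a
  proof -
    have "x * y * a = x * a * y" using assms(3) that by (simp add: centre_in_def mult.assoc)
    also have "\<dots> = a * (x * y)" using assms(2) that by (simp add: centre_in_def mult.assoc)
    finally show ?thesis .
  qed
  then show ?thesis using assms by (simp add: centre_in_def)
qed

locale central_tensor =
  fixes A R M T :: "'b::ring_1 set" and n :: nat and P :: "nat \<Rightarrow> 'b" and i :: "'b \<Rightarrow> nat \<Rightarrow> 'b"
  assumes A_add_subgroup: "add_subgroup A"
    and A_mult_closed: "\<forall>x\<in>A. \<forall>y\<in>A. x * y \<in> A"
    and R_central: "R \<subseteq> centre_in A A"
    and M_central: "M \<subseteq> centre_in A T"
    and M_submodule: "submodule_over R M"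
    and basis: "dual_basis R M n P i"
    and iso: "tensor_mult_iso M R A T"
begin

lemma free_ab_centre_subset: "free_ab M (centre_in A A) \<subseteq> free_ab M A"
  by (rule free_ab_mono[OF centre_in_subset])

lemma coordinate_central: "m \<in> M \<Longrightarrow> i m k \<in> centre_in A A"
  using basis R_central by (auto simp: dual_basis_def)

lemma tensor_eval_in_centre:
  assumes f: "f \<in> free_ab M (centre_in A A)"
  shows "tensor_eval f \<in> centre_in A T"
proof -
  have "tensor_eval f \<in> T"
    using iso f free_ab_centre_subset by (auto simp: tensor_mult_iso_def)
  moreover have "tensor_eval f * a = a * tensor_eval f" if a: "a \<in> A" for a
  proof -
    have "of_int (f x) * (fst x * snd x) * a = a * (of_int (f x) * (fst x * snd x))"
      if "f x \<noteq> 0" for x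
    proof -
      have "fst x \<in> centre_in A T" "snd x \<in> centre_in A A"
        using free_ab_support[OF f that] M_central by auto
      then have "fst x * snd x * a = a * (fst x * snd x)"
        using a by (simp add: centre_in_left_commute centre_in_def mult.assoc)
      then show ?thesis by (metis mult.assoc of_int_mult_left_commute)
    qed
    then show ?thesis
      unfolding tensor_eval_def sum_distrib_left sum_distrib_right by (intro sum.cong) auto
  qed
  ultimately show ?thesis by (simp add: centre_in_def)
qed

lemma formal_commutator_in_tensor_rel:
  assumes f: "f \<in> free_ab M A" and t: "tensor_eval f \<in> centre_in A T" and a: "a \<in> A"
  shows "formal_commutator a f \<in> tensor_rel M R A"
proof -
  have "fst x * (a * snd x) = a * (fst x * snd x)" if "f x \<noteq> 0" for x
    using free_ab_support[OF f that] M_central a by (blast intro: centre_in_left_commute)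
  then have "tensor_eval (formal_commutator a f) = a * tensor_eval f - tensor_eval f * a"
    unfolding tensor_eval_eq_tensor_lift using f
    by (intro tensor_lift_formal_commutator) (simp_all add: free_ab_def mult.assoc)
  also have "\<dots> = 0" using t a by (simp add: centre_in_def)
  finally show ?thesis
    using iso f a A_mult_closed formal_commutator_in_free_ab[of f M A a]
    by (simp add: tensor_mult_iso_def)
qed

lemma tensor_lift_coordinate_in_centre:
  assumes f: "f \<in> free_ab M A" and t: "tensor_eval f \<in> centre_in A T"
  shows "tensor_lift (dual_coordinate i k) f \<in> centre_in A A"
proof -
  let ?v = "tensor_lift (dual_coordinate i k) f"
  have S: "finite {x. f x \<noteq> 0}" "{x. f x \<noteq> 0} \<subseteq> M \<times> A" using f by (auto simp: free_ab_def)
  have "?v \<in> A"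
    unfolding tensor_lift_def dual_coordinate_def
    using S A_add_subgroup A_mult_closed coordinate_central centre_in_subset
    by (intro sum_closed add_subgroup_of_int_mult) (auto simp: add_subgroup_def, blast+)
  moreover have "?v * a = a * ?v" if a: "a \<in> A" for a
  proof -
    have "i (fst x) k * (a * snd x) = a * (i (fst x) k * snd x)" if "f x \<noteq> 0" for x
      using free_ab_support[OF f that] coordinate_central a by (blast intro: centre_in_left_commute)
    then have "tensor_lift (dual_coordinate i k) (formal_commutator a f) = a * ?v - ?v * a"
      using S(1) by (intro tensor_lift_formal_commutator) (simp_all add: dual_coordinate_def mult.assoc)
    moreover have "tensor_lift (dual_coordinate i k) (formal_commutator a f) = 0"
      using formal_commutator_in_tensor_rel[OF f t a] balanced_dual_coordinate[OF basis]
      by (rule tensor_lift_tensor_rel)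
    ultimately show ?thesis by simp
  qed
  ultimately show ?thesis by (simp add: centre_in_def)
qed

lemma centre_in_image_tensor_eval:
  assumes t: "t \<in> centre_in A T"
  shows "\<exists>g\<in>free_ab M (centre_in A A). tensor_eval g = t"
proof -
  obtain f where f: "f \<in> free_ab M A" and ft: "tensor_eval f = t"
    using iso t centre_in_subset by (force simp: tensor_mult_iso_def)
  define v where "v k = tensor_lift (dual_coordinate i k) f" for k
  let ?g = "formal_sum {..<n} (\<lambda>_. 1) (\<lambda>k. (P k, v k))"
  have "?g \<in> free_ab M (centre_in A A)"
    using basis tensor_lift_coordinate_in_centre[OF f] t ft
    by (intro formal_sum_in_free_ab) (auto simp: dual_basis_def v_def)
  moreover have "tensor_eval ?g = t"
    using tensor_eval_dual_basis_expansion[OF basis f] ft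
    by (simp add: tensor_eval_eq_tensor_lift tensor_lift_formal_sum v_def)
  ultimately show ?thesis by blast
qed

lemma tensor_eval_eq_0_imp_tensor_rel_centre:
  assumes f: "f \<in> free_ab M (centre_in A A)" and f0: "tensor_eval f = 0"
  shows "f \<in> tensor_rel M R (centre_in A A)"
proof -
  let ?Z = "centre_in A A"
  have "f \<in> tensor_rel M R A"
    using iso f f0 free_ab_centre_subset by (auto simp: tensor_mult_iso_def)
  then have coord0: "tensor_lift (dual_coordinate i k) f = 0" for k
    using balanced_dual_coordinate[OF basis] by (rule tensor_lift_tensor_rel)
  have Z: "add_subgroup ?Z" using A_add_subgroup by (rule add_subgroup_centre_in)
  have RZ: "\<forall>r\<in>R. \<forall>z\<in>?Z. r * z \<in> ?Z"
    using R_central A_mult_closed centre_in_mult_closed[of A] centre_in_subset by blast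
  have "tensor_equiv M R ?Z f (\<lambda>y. \<Sum>k<n. pt (P k, 0) y)"
    using tensor_equiv_dual_basis_expansion[OF basis M_submodule Z RZ f] by (simp add: coord0)
  also have "tensor_equiv M R ?Z \<dots> (\<lambda>y. \<Sum>k<n. 0)"
    using basis Z
    by (intro tensor_equiv_sum) (auto simp: tensor_equiv_0_iff dual_basis_def add_subgroup_def
        intro!: pt_zero_right_in_tensor_rel)
  finally show ?thesis by (simp add: tensor_equiv_0_iff)
qed

theorem tensor_mult_iso_centre: "tensor_mult_iso M R (centre_in A A) (centre_in A T)"
  using tensor_eval_in_centre centre_in_image_tensor_eval tensor_eval_eq_0_imp_tensor_rel_centre
  by (simp add: tensor_mult_iso_def)

end

lemma unital_star_subalgebra_add_subgroup:
  assumes alg: "complex_star_algebra sc st" and S: "unital_star_subalgebra sc st S"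
  shows "add_subgroup S"
proof -
  have sc_add: "sc (c + c') x = sc c x + sc c' x" and sc_one: "sc 1 x = x" for c c' x
    using alg by (simp_all add: complex_star_algebra_def)
  have sc_zero: "sc 0 x = 0" for x
    using sc_add[of 0 0 x] by simp
  have "sc (-1) x = - x" for x
    using sc_add[of "-1" 1 x] by (simp add: sc_one sc_zero eq_neg_iff_add_eq_0)
  with S show ?thesis unfolding unital_star_subalgebra_def add_subgroup_def by metis
qed

text \<open>The derivation and the *-structure are used only to see that A is closed under negation.\<close>

theorem proposition4p16:
  fixes sc :: "complex \<Rightarrow> 'b::ring_1 \<Rightarrow> 'b"
    and st :: "'b \<Rightarrow> 'b"
    and A A' E' :: "'b set"
    and d :: "'b \<Rightarrow> 'b"
  assumes alg: "complex_star_algebra sc st"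
    and A: "unital_star_subalgebra sc st A"
    and d_leibniz: "\<forall>a\<in>A. \<forall>b\<in>A. d (a * b) = a * d b + d a * b"
    and d_star: "\<forall>a\<in>A. d (st a) = - st (d a)"
    and A': "unital_star_subalgebra sc st A'" "A' \<subseteq> centre_in A A"
    and E'_sub: "E' \<subseteq> centre_in A (cspan sc {a * d b | a b. a \<in> A \<and> b \<in> A})"
    and E'_mod: "submodule_over A' E'"
    and E'_proj: "fg_projective A' E'"
    and iso: "tensor_mult_iso E' A' A (cspan sc {a * d b | a b. a \<in> A \<and> b \<in> A})"
  shows "tensor_mult_iso E' A' (centre_in A A)
           (centre_in A (cspan sc {a * d b | a b. a \<in> A \<and> b \<in> A}))"
proof -
  obtain n P i where basis: "dual_basis A' E' n P i"
    using fg_projective_imp_dual_basis[OF E'_proj] A'(1)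
    by (auto simp: unital_star_subalgebra_def)
  have "central_tensor A A' E' (cspan sc {a * d b | a b. a \<in> A \<and> b \<in> A}) n P i"
    using unital_star_subalgebra_add_subgroup[OF alg A] A A'(2) E'_sub E'_mod basis iso
    by unfold_locales (auto simp: unital_star_subalgebra_def)
  then show ?thesis by (rule central_tensor.tensor_mult_iso_centre)
qed

end
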